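(* Let $\mathbf{C}\in\mathbb{R}^{dm\times dm}$ be the matrix defined in the context. Consider Problem (A): minimize $\langle \mathbf{C},\mathbf{R}^\top\mathbf{R}\rangle$ over $\mathbf{R}=[\mathbf{R}_1\cdots\mathbf{R}_m]\in\mathbb{R}^{d\times dm}$ subject to $\mathbf{R}_1,\ldots,\mathbf{R}_m\in\mathbb{SO}(d)$; Problem (B): minimize $\langle\mathbf{C},\mathbf{G}\rangle$ over symmetric $\mathbf{G}\in\mathbb{R}^{dm\times dm}$ subject to $\mathbf{G}$ positive semidefinite, $\mathrm{rank}(\mathbf{G})\le d$, $\mathbf{G}_{ii}=\mathbf{I}$ for $i\in\{1,\ldots,m\}$, and $\mathbf{G}_{i,i+1}\in\mathbb{SO}(d)$ for $i\in\{1,\ldots,m-1\}$. Then Problems (A) and (B) are equivalent: $\mathbf{G}^\star$ is a minimizer of (B) if and only if $\mathbf{G}^\star=(\mathbf{R}^\star)^\top\mathbf{R}^\star$ for some minimizer $\mathbf{R}^\star$ of (A).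
   Context: $\mathbb{SO}(d)=\{\mathbf{R}\in\mathbb{R}^{d\times d}:\mathbf{R}^\top\mathbf{R}=\mathbf{I},\ \det\mathbf{R}=1\}$; $\langle\mathbf{A},\mathbf{B}\rangle=\mathrm{trace}(\mathbf{A}^\top\mathbf{B})$. For $\mathbf{X}\in\mathbb{R}^{dm\times dm}$, $\mathbf{X}_{ij}$ denotes its $(i,j)$-th $d\times d$ block. Data: point sets $\mathcal{P}_1,\ldots,\mathcal{P}_m\subset\mathbb{R}^d$; write $i\sim j$ if $\mathcal{P}_i$ and $\mathcal{P}_j$ share common points, with $n_{ij}$ common points whose local coordinates are $\boldsymbol{x}^k_{ij}$ (in $\mathcal{P}_i$) and $\boldsymbol{x}^k_{ji}$ (in $\mathcal{P}_j$), $1\le k\le n_{ij}$. Let $\boldsymbol{e}_i\in\mathbb{R}^m$ be the $i$-th standard basis vector, $\boldsymbol{e}_{ij}=\boldsymbol{e}_i-\boldsymbol{e}_j$, $\boldsymbol{d}^k_{ij}=(\boldsymbol{e}_i\otimes\mathbf{I})\boldsymbol{x}^k_{ij}-(\boldsymbol{e}_j\otimes\mathbf{I})\boldsymbol{x}^k_{ji}\in\mathbb{R}^{dm}$. Define $\mathbf{L}=\sum_{i\sim j}n_{ij}\boldsymbol{e}_{ij}\boldsymbol{e}_{ij}^\top$, $\mathbf{B}=\sum_{i\sim j}\sum_{k=1}^{n_{ij}}\boldsymbol{d}^k_{ij}\boldsymbol{e}_{ij}^\top$, $\mathbf{D}=\sum_{i\sim j}\sum_{k=1}^{n_{ij}}\boldsymbol{d}^k_{ij}(\boldsymbol{d}^k_{ij})^\top$,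 and $\mathbf{C}=\mathbf{D}-\mathbf{B}\mathbf{L}^\dagger\mathbf{B}^\top$, where $\mathbf{L}^\dagger$ is the Moore–Penrose pseudo-inverse. *)

theory Defs
  imports "Jordan_Normal_Form.DL_Rank" "Jordan_Normal_Form.Determinant"
begin

definition mat_trace :: "real mat \<Rightarrow> real" where
  "mat_trace A = (\<Sum>i<dim_row A. A $$ (i, i))"

definition mat_inner :: "real mat \<Rightarrow> real mat \<Rightarrow> real" where
  "mat_inner A B = mat_trace (transpose_mat A * B)"

definition SO :: "nat \<Rightarrow> real mat set" where
  "SO d = {Q. Q \<in> carrier_mat d d \<and> transpose_mat Q * Q = 1\<^sub>m d \<and> det Q = 1}"

definition psd :: "real mat \<Rightarrow> bool" where
  "psd A \<longleftrightarrow> (\<exists>n. A \<in> carrier_mat n n \<and> transpose_mat A = A \<and>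
      (\<forall>v \<in> carrier_vec n. 0 \<le> v \<bullet> (A *\<^sub>v v)))"

definition mat_rank :: "real mat \<Rightarrow> nat" where
  "mat_rank A = vec_space.rank (dim_row A) A"

definition pinv :: "real mat \<Rightarrow> real mat" where
  "pinv A = (THE X. X \<in> carrier_mat (dim_col A) (dim_row A) \<and>
      A * X * A = A \<and> X * A * X = X \<and>
      transpose_mat (A * X) = A * X \<and> transpose_mat (X * A) = X * A)"

definition outer :: "real vec \<Rightarrow> real vec \<Rightarrow> real mat" where
  "outer u v = mat (dim_vec u) (dim_vec v) (\<lambda>(a, b). u $ a * v $ b)"

definition sum_mats :: "nat \<Rightarrow> nat \<Rightarrow> ('i \<Rightarrow> real mat) \<Rightarrow> 'i set \<Rightarrow> real mat" where
  "sum_mats nr nc f S = mat nr nc (\<lambda>(a, b). \<Sum>s\<in>S. f s $$ (a, b))"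

section \<open>Block notation (0-based block indices)\<close>

definition blk :: "nat \<Rightarrow> real mat \<Rightarrow> nat \<Rightarrow> nat \<Rightarrow> real mat" where
  "blk d X i j = mat d d (\<lambda>(a, b). X $$ (d * i + a, d * j + b))"

definition cblk :: "nat \<Rightarrow> real mat \<Rightarrow> nat \<Rightarrow> real mat" where
  "cblk d R i = mat d d (\<lambda>(a, b). R $$ (a, d * i + b))"

text \<open>(e_i \<otimes> I) v : places v in the i-th block of a vector of length dm.\<close>
definition emb :: "nat \<Rightarrow> nat \<Rightarrow> nat \<Rightarrow> real vec \<Rightarrow> real vec" where
  "emb d m i v = vec (d * m) (\<lambda>c. if c div d = i then v $ (c mod d) else 0)"

text \<open>Data: n i j = number of common points of P_i and P_j (i \<sim> j iff n i j > 0);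
  x i j k = local coordinates in P_i of the k-th common point (k < n i j).
  Pairs i \<sim> j are summed once each (as unordered pairs, i < j); 0-based indices.\<close>
definition edges :: "nat \<Rightarrow> (nat \<Rightarrow> nat \<Rightarrow> nat) \<Rightarrow> (nat \<times> nat) set" where
  "edges m n = {(i, j). i < j \<and> j < m \<and> 0 < n i j}"

definition evec :: "nat \<Rightarrow> nat \<Rightarrow> nat \<Rightarrow> real vec" where
  "evec m i j = unit_vec m i - unit_vec m j"

definition dvec :: "nat \<Rightarrow> nat \<Rightarrow> (nat \<Rightarrow> nat \<Rightarrow> nat \<Rightarrow> real vec) \<Rightarrow> nat \<Rightarrow> nat \<Rightarrow> nat \<Rightarrow> real vec" where
  "dvec d m x i j k = emb d m i (x i j k) - emb d m j (x j i k)"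

definition Lmat :: "nat \<Rightarrow> (nat \<Rightarrow> nat \<Rightarrow> nat) \<Rightarrow> real mat" where
  "Lmat m n = sum_mats m m (\<lambda>(i, j). real (n i j) \<cdot>\<^sub>m outer (evec m i j) (evec m i j)) (edges m n)"

definition Bmat :: "nat \<Rightarrow> nat \<Rightarrow> (nat \<Rightarrow> nat \<Rightarrow> nat) \<Rightarrow> (nat \<Rightarrow> nat \<Rightarrow> nat \<Rightarrow> real vec) \<Rightarrow> real mat" where
  "Bmat d m n x = sum_mats (d * m) m
     (\<lambda>((i, j), k). outer (dvec d m x i j k) (evec m i j))
     (SIGMA e : edges m n. {..< n (fst e) (snd e)})"

definition Dmat :: "nat \<Rightarrow> nat \<Rightarrow> (nat \<Rightarrow> nat \<Rightarrow> nat) \<Rightarrow> (nat \<Rightarrow> nat \<Rightarrow> nat \<Rightarrow> real vec) \<Rightarrow> real mat" where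
  "Dmat d m n x = sum_mats (d * m) (d * m)
     (\<lambda>((i, j), k). outer (dvec d m x i j k) (dvec d m x i j k))
     (SIGMA e : edges m n. {..< n (fst e) (snd e)})"

definition Cmat :: "nat \<Rightarrow> nat \<Rightarrow> (nat \<Rightarrow> nat \<Rightarrow> nat) \<Rightarrow> (nat \<Rightarrow> nat \<Rightarrow> nat \<Rightarrow> real vec) \<Rightarrow> real mat" where
  "Cmat d m n x = Dmat d m n x - Bmat d m n x * pinv (Lmat m n) * transpose_mat (Bmat d m n x)"

definition feasA :: "nat \<Rightarrow> nat \<Rightarrow> real mat \<Rightarrow> bool" where
  "feasA d m R \<longleftrightarrow> R \<in> carrier_mat d (d * m) \<and> (\<forall>i<m. cblk d R i \<in> SO d)"

definition minA :: "nat \<Rightarrow> nat \<Rightarrow> real mat \<Rightarrow> real mat \<Rightarrow> bool" where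
  "minA d m C R \<longleftrightarrow> feasA d m R \<and>
     (\<forall>R'. feasA d m R' \<longrightarrow> mat_inner C (transpose_mat R * R) \<le> mat_inner C (transpose_mat R' * R'))"

definition feasB :: "nat \<Rightarrow> nat \<Rightarrow> real mat \<Rightarrow> bool" where
  "feasB d m G \<longleftrightarrow> G \<in> carrier_mat (d * m) (d * m) \<and> transpose_mat G = G \<and> psd G \<and>
     mat_rank G \<le> d \<and> (\<forall>i<m. blk d G i i = 1\<^sub>m d) \<and>
     (\<forall>i. i + 1 < m \<longrightarrow> blk d G i (i + 1) \<in> SO d)"

definition minB :: "nat \<Rightarrow> nat \<Rightarrow> real mat \<Rightarrow> real mat \<Rightarrow> bool" where
  "minB d m C G \<longleftrightarrow> feasB d m G \<and>
     (\<forall>G'. feasB d m G' \<longrightarrow> mat_inner C G \<le> mat_inner C G')"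

end

theory Submission
  imports Defs "Jordan_Normal_Form.DL_Rank_Submatrix"
begin

text \<open>A feasible point of (B) has rank at most \<open>d\<close> and its leading \<open>d \<times> d\<close> block is the
  identity. Every \<open>(d+1)\<close>-minor bordering that block must vanish, which forces the Schur
  complement of the block to be zero; hence \<open>G = R\<^sup>T R\<close> where \<open>R\<close> consists of the first \<open>d\<close>
  rows of \<open>G\<close>. The constraints \<open>G\<^sub>i\<^sub>i = I\<close> make the blocks \<open>R\<^sub>i\<close> orthogonal, and
  \<open>R\<^sub>1 = I\<close> together with \<open>det (R\<^sub>i\<^sup>T R\<^sub>i\<^sub>+\<^sub>1) = 1\<close> propagates \<open>det R\<^sub>i = 1\<close> along the chain.
  Conversely every \<open>R\<^sup>T R\<close> with \<open>R\<^sub>i \<in> SO(d)\<close> is feasible for (B). So the map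
  \<open>R \<mapsto> R\<^sup>T R\<close> is onto the feasible set of (B) and preserves the objective, whatever \<open>C\<close> is.\<close>

lemma block_index_less: "a < d \<Longrightarrow> i < m \<Longrightarrow> d * i + a < d * (m::nat)"
proof -
  assume "a < d" "i < m"
  then have "d * i + a < d * (i + 1)" by simp
  also have "\<dots> \<le> d * m" using \<open>i < m\<close> by (intro mult_le_mono2) simp
  finally show ?thesis .
qed

lemma blk_transpose_mult:
  assumes R: "R \<in> carrier_mat d (d * m)" and i: "i < m" and j: "j < m"
  shows "blk d (transpose_mat R * R) i j = transpose_mat (cblk d R i) * cblk d R j"
  using R block_index_less[OF _ i, of _ d] block_index_less[OF _ j, of _ d]
  by (intro eq_matI) (auto simp: blk_def cblk_def scalar_prod_def)

lemma transpose_mult_self_symmetric: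
  fixes R :: "'a :: comm_semiring_0 mat"
  assumes R: "R \<in> carrier_mat d N"
  shows "transpose_mat (transpose_mat R * R) = transpose_mat R * R"
  using R by (subst transpose_mult[of _ N d _ N]) auto

lemma psd_transpose_mult_self:
  fixes R :: "real mat"
  assumes R: "R \<in> carrier_mat d N"
  shows "psd (transpose_mat R * R)"
  unfolding psd_def
proof (intro exI[of _ N] conjI ballI)
  show "transpose_mat R * R \<in> carrier_mat N N" using R by auto
  show "transpose_mat (transpose_mat R * R) = transpose_mat R * R"
    using transpose_mult_self_symmetric[OF R] .
  fix v :: "real vec" assume v: "v \<in> carrier_vec N"
  have "v \<bullet> ((transpose_mat R * R) *\<^sub>v v) = v \<bullet> (transpose_mat R *\<^sub>v (R *\<^sub>v v))"
    using R v by (subst assoc_mult_mat_vec[of _ N d _ N]) auto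
  also have "\<dots> = (transpose_mat R *\<^sub>v (R *\<^sub>v v)) \<bullet> v"
    using R v by (intro comm_scalar_prod[of _ N]) auto
  also have "\<dots> = (R *\<^sub>v v) \<bullet> (R *\<^sub>v v)"
    using R v by (intro transpose_vec_mult_scalar) auto
  also have "\<dots> \<ge> 0" unfolding scalar_prod_def by (intro sum_nonneg) auto
  finally show "0 \<le> v \<bullet> ((transpose_mat R * R) *\<^sub>v v)" .
qed

lemma mat_rank_transpose_mult_self_le:
  fixes R :: "real mat"
  assumes R: "R \<in> carrier_mat d N"
  shows "mat_rank (transpose_mat R * R) \<le> d"
proof -
  define A where "A k = mat N N (\<lambda>(i, j). \<Sum>l<k. R $$ (l, i) * R $$ (l, j))" for k
  have "vec_space.rank N (A k) \<le> k" for k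
  proof (induction k)
    case 0
    have "A 0 = 0\<^sub>m N N" unfolding A_def by (rule eq_matI) auto
    then show ?case by (simp add: vec_space.rank_0I)
  next
    case (Suc k)
    define E where "E = mat N N (\<lambda>(i, j). R $$ (k, i) * R $$ (k, j))"
    have "A (Suc k) = A k + E" unfolding A_def E_def by (rule eq_matI) auto
    moreover have "vec_space.rank N E \<le> 1"
      by (rule vec_space.rank_le_1_product_entries[of E N N "\<lambda>i. R $$ (k, i)" "\<lambda>j. R $$ (k, j)"])
        (auto simp: E_def)
    moreover have "vec_space.rank N (A k + E) \<le> vec_space.rank N (A k) + vec_space.rank N E"
      by (rule vec_space.rank_subadditive) (auto simp: A_def E_def)
    ultimately show ?case using Suc.IH by simp
  qed
  moreover have "transpose_mat R * R = A d"
    unfolding A_def using R by (intro eq_matI) (auto simp: scalar_prod_def atLeast0LessThan)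
  ultimately show ?thesis unfolding mat_rank_def by (simp add: A_def)
qed

lemma det_bordered_identity:
  fixes S :: "'a :: comm_ring_1 mat"
  assumes S: "S \<in> carrier_mat (Suc d) (Suc d)"
    and I: "\<And>a b. a < d \<Longrightarrow> b < d \<Longrightarrow> S $$ (a, b) = (if a = b then 1 else 0)"
  shows "det S = S $$ (d, d) - (\<Sum>k<d. S $$ (d, k) * S $$ (k, d))"
proof -
  text \<open>Column operations clearing the last column above the diagonal.\<close>
  define M :: "'a mat" where "M = mat (Suc d) (Suc d)
    (\<lambda>(i, j). if i = j then 1 else if j = d \<and> i < d then - S $$ (i, d) else 0)"
  have Mc: "M \<in> carrier_mat (Suc d) (Suc d)" unfolding M_def by simp
  have "det M = prod_list (diag_mat M)"
    by (rule det_upper_triangular[OF _ Mc]) (auto simp: upper_triangular_def M_def)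
  also have "\<dots> = 1" unfolding prod_list_diag_prod by (intro prod.neutral) (auto simp: M_def)
  finally have det_M: "det M = 1" .
  have SM_col: "(S * M) $$ (i, j) = (\<Sum>k<d. S $$ (i, k) * M $$ (k, j)) + S $$ (i, d) * M $$ (d, j)"
    if "i < Suc d" "j < Suc d" for i j
    using that S Mc by (simp add: scalar_prod_def atLeast0LessThan)
  have SM_left: "(S * M) $$ (i, j) = S $$ (i, j)" if "i < Suc d" "j < d" for i j
  proof -
    have "(\<Sum>k<d. S $$ (i, k) * M $$ (k, j)) = (\<Sum>k<d. if k = j then S $$ (i, j) else 0)"
      using that by (intro sum.cong) (auto simp: M_def)
    then show ?thesis using SM_col[of i j] that by (simp add: M_def)
  qed
  have SM_last: "(S * M) $$ (i, d) = S $$ (i, d) - (\<Sum>k<d. S $$ (i, k) * S $$ (k, d))"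
    if "i < Suc d" for i
  proof -
    have "(\<Sum>k<d. S $$ (i, k) * M $$ (k, d)) = (\<Sum>k<d. - (S $$ (i, k) * S $$ (k, d)))"
      by (intro sum.cong) (auto simp: M_def)
    then show ?thesis using SM_col[of i d] that by (simp add: M_def sum_negf)
  qed
  have SM_upper: "(S * M) $$ (i, d) = 0" if "i < d" for i
  proof -
    have "(\<Sum>k<d. S $$ (i, k) * S $$ (k, d)) = (\<Sum>k<d. if k = i then S $$ (i, d) else 0)"
      using that I by (intro sum.cong) auto
    then show ?thesis using SM_last[of i] that by simp
  qed
  have SMc: "S * M \<in> carrier_mat (Suc d) (Suc d)" using S Mc by simp
  have "det (S * M) = prod_list (diag_mat (S * M))"
    by (rule det_lower_triangular[OF _ SMc])
      (metis SM_left SM_upper I less_Suc_eq less_imp_neq order.strict_trans)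
  also have "\<dots> = (\<Prod>i<d. (S * M) $$ (i, i)) * (S * M) $$ (d, d)"
    unfolding prod_list_diag_prod using S by (simp add: atLeast0LessThan)
  also have "\<dots> = S $$ (d, d) - (\<Sum>k<d. S $$ (d, k) * S $$ (k, d))"
    using SM_left I SM_last[of d] by (simp add: prod.neutral)
  finally show ?thesis using det_mult[OF S Mc] det_M by simp
qed

lemma pick_insert_lessThan:
  assumes p: "d \<le> p" and i: "i < Suc d"
  shows "pick (insert p {..<d}) i = (if i < d then i else p)"
proof (cases "i < d")
  case True
  have "{a \<in> insert p {..<d}. a < i} = {..<i}" using True p by auto
  then show ?thesis using pick_card_in_set[of i "insert p {..<d}"] True by simp
next
  case False
  have "{a \<in> insert p {..<d}. a < p} = {..<d}" using p by auto
  moreover have "i = d" using False i by simp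
  ultimately show ?thesis using pick_card_in_set[of p "insert p {..<d}"] by simp
qed

lemma submatrix_bordered:
  fixes G :: "'a mat"
  assumes G: "G \<in> carrier_mat M N"
    and p: "d \<le> p" "p < M" and q: "d \<le> q" "q < N"
  defines "S \<equiv> submatrix G (insert p {..<d}) (insert q {..<d})"
  shows "S \<in> carrier_mat (Suc d) (Suc d)"
    and "\<And>i j. i < Suc d \<Longrightarrow> j < Suc d \<Longrightarrow>
           S $$ (i, j) = G $$ (if i < d then i else p, if j < d then j else q)"
proof -
  have card_rows: "card {i. i < dim_row G \<and> i \<in> insert p {..<d}} = Suc d"
  proof -
    have "{i. i < dim_row G \<and> i \<in> insert p {..<d}} = insert p {..<d}" using G p by auto
    then show ?thesis using p by simp
  qed
  have card_cols: "card {j. j < dim_col G \<and> j \<in> insert q {..<d}} = Suc d"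
  proof -
    have "{j. j < dim_col G \<and> j \<in> insert q {..<d}} = insert q {..<d}" using G q by auto
    then show ?thesis using q by simp
  qed
  show "S \<in> carrier_mat (Suc d) (Suc d)"
    using card_rows card_cols by (simp add: S_def submatrix_def)
  fix i j assume "i < Suc d" "j < Suc d"
  then show "S $$ (i, j) = G $$ (if i < d then i else p, if j < d then j else q)"
    using card_rows card_cols p q
    by (simp add: S_def submatrix_index pick_insert_lessThan)
qed

lemma entry_eq_sum_of_rank_le:
  fixes G :: "'a :: field mat"
  assumes G: "G \<in> carrier_mat M N" and dM: "d \<le> M" and dN: "d \<le> N"
    and Id: "\<And>a b. a < d \<Longrightarrow> b < d \<Longrightarrow> G $$ (a, b) = (if a = b then 1 else 0)"
    and rk: "vec_space.rank M G \<le> d"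
    and p: "p < M" and q: "q < N"
  shows "G $$ (p, q) = (\<Sum>k<d. G $$ (p, k) * G $$ (k, q))"
proof (cases "p < d \<or> q < d")
  case True
  then show ?thesis
  proof
    assume "p < d"
    then have "(\<Sum>k<d. G $$ (p, k) * G $$ (k, q)) = (\<Sum>k<d. if k = p then G $$ (p, q) else 0)"
      using Id by (intro sum.cong) auto
    then show ?thesis using \<open>p < d\<close> by simp
  next
    assume "q < d"
    then have "(\<Sum>k<d. G $$ (p, k) * G $$ (k, q)) = (\<Sum>k<d. if k = q then G $$ (p, q) else 0)"
      using Id by (intro sum.cong) auto
    then show ?thesis using \<open>q < d\<close> by simp
  qed
next
  case False
  then have pd: "d \<le> p" and qd: "d \<le> q" by auto
  define S where "S = submatrix G (insert p {..<d}) (insert q {..<d})"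
  note S = submatrix_bordered[OF G pd p qd q, folded S_def]
  have "det S = S $$ (d, d) - (\<Sum>k<d. S $$ (d, k) * S $$ (k, d))"
    by (rule det_bordered_identity[OF S(1)]) (simp add: S(2) Id)
  also have "\<dots> = G $$ (p, q) - (\<Sum>k<d. G $$ (p, k) * G $$ (k, q))"
    by (simp add: S(2))
  finally have det_S: "det S = G $$ (p, q) - (\<Sum>k<d. G $$ (p, k) * G $$ (k, q))" .
  show ?thesis
  proof (rule ccontr)
    assume "G $$ (p, q) \<noteq> (\<Sum>k<d. G $$ (p, k) * G $$ (k, q))"
    then have "det S \<noteq> 0" using det_S by simp
    from vec_space.rank_gt_minor[OF G this[unfolded S_def]]
    have "card {j. j < N \<and> j \<in> insert q {..<d}} \<le> vec_space.rank M G" .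
    moreover have "{j. j < N \<and> j \<in> insert q {..<d}} = insert q {..<d}" using q dN by auto
    ultimately show False using rk qd by simp
  qed
qed

lemma symmetric_rank_le_eq_gram:
  fixes G :: "real mat"
  assumes G: "G \<in> carrier_mat N N" and sym: "transpose_mat G = G" and dN: "d \<le> N"
    and Id: "\<And>a b. a < d \<Longrightarrow> b < d \<Longrightarrow> G $$ (a, b) = (if a = b then 1 else 0)"
    and rk: "vec_space.rank N G \<le> d"
  defines "U \<equiv> mat d N (\<lambda>(a, c). G $$ (a, c))"
  shows "G = transpose_mat U * U"
proof (rule eq_matI)
  fix i j assume "i < dim_row (transpose_mat U * U)" "j < dim_col (transpose_mat U * U)"
  then have ij: "i < N" "j < N" by (auto simp: U_def)
  have "G $$ (i, k) = G $$ (k, i)" if "k < d" for k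
    using arg_cong[OF sym, of "\<lambda>X. X $$ (k, i)"] G ij that dN by simp
  then have "G $$ (i, j) = (\<Sum>k<d. G $$ (k, i) * G $$ (k, j))"
    using entry_eq_sum_of_rank_le[OF G dN dN Id rk ij] by simp
  then show "G $$ (i, j) = (transpose_mat U * U) $$ (i, j)"
    using ij by (simp add: U_def scalar_prod_def atLeast0LessThan)
qed (use G in \<open>auto simp: U_def\<close>)

lemma SO_transpose_mult:
  assumes A: "A \<in> SO d" and B: "B \<in> SO d"
  shows "transpose_mat A * B \<in> SO d"
proof -
  have Ac: "A \<in> carrier_mat d d" and AtA: "transpose_mat A * A = 1\<^sub>m d" and det_A: "det A = 1"
    using A by (auto simp: SO_def)
  have Bc: "B \<in> carrier_mat d d" and BtB: "transpose_mat B * B = 1\<^sub>m d" and det_B: "det B = 1"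
    using B by (auto simp: SO_def)
  have AAt: "A * transpose_mat A = 1\<^sub>m d"
    by (rule mat_mult_left_right_inverse[OF _ Ac AtA]) (use Ac in simp)
  have "transpose_mat (transpose_mat A * B) * (transpose_mat A * B)
      = (transpose_mat B * A) * (transpose_mat A * B)"
    using Ac Bc by (subst transpose_mult[of _ d d _ d]) auto
  also have "\<dots> = transpose_mat B * ((A * transpose_mat A) * B)"
    using Ac Bc by (simp add: assoc_mult_mat[of _ d d _ d _ d])
  also have "\<dots> = 1\<^sub>m d" using AAt BtB Bc by simp
  finally have orth: "transpose_mat (transpose_mat A * B) * (transpose_mat A * B) = 1\<^sub>m d" .
  have "det (transpose_mat A * B) = det A * det B"
    using Ac Bc by (simp add: det_mult[of _ d] det_transpose)
  then show ?thesis using orth Ac Bc det_A det_B by (auto simp: SO_def)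
qed

lemma det_chain_eq_one:
  fixes Q :: "nat \<Rightarrow> real mat"
  assumes Q: "\<And>i. Q i \<in> carrier_mat d d" and Q0: "det (Q 0) = 1"
    and step: "\<And>i. i + 1 < m \<Longrightarrow> det (transpose_mat (Q i) * Q (i + 1)) = 1"
  shows "i < m \<Longrightarrow> det (Q i) = 1"
proof (induction i)
  case (Suc i)
  have "det (transpose_mat (Q i) * Q (Suc i)) = det (Q i) * det (Q (Suc i))"
    using det_mult[of "transpose_mat (Q i)" d "Q (Suc i)"] det_transpose[OF Q[of i]] Q by simp
  then show ?case using Suc step[of i] by simp
qed (use Q0 in simp)

lemma feasB_transpose_mult_self:
  assumes R: "feasA d m R"
  shows "feasB d m (transpose_mat R * R)"
proof -
  have Rc: "R \<in> carrier_mat d (d * m)" and Ri: "\<And>i. i < m \<Longrightarrow> cblk d R i \<in> SO d"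
    using R by (auto simp: feasA_def)
  have "blk d (transpose_mat R * R) i i = 1\<^sub>m d" if "i < m" for i
    using blk_transpose_mult[OF Rc that that] Ri[OF that] by (simp add: SO_def)
  moreover have "blk d (transpose_mat R * R) i (i + 1) \<in> SO d" if "i + 1 < m" for i
    using blk_transpose_mult[OF Rc, of i "i + 1"] that SO_transpose_mult[OF Ri Ri, of i "i + 1"]
    by simp
  ultimately show ?thesis
    unfolding feasB_def
    using Rc transpose_mult_self_symmetric[OF Rc] psd_transpose_mult_self[OF Rc]
      mat_rank_transpose_mult_self_le[OF Rc]
    by auto
qed

lemma feasB_imp_gram_of_feasA:
  assumes GB: "feasB d m G"
  shows "\<exists>R. feasA d m R \<and> G = transpose_mat R * R"
proof (cases "m = 0")
  case True
  then have "G = transpose_mat (0\<^sub>m d 0) * 0\<^sub>m d 0" and "feasA d m (0\<^sub>m d 0)"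
    using GB by (auto simp: feasB_def feasA_def)
  then show ?thesis by blast
next
  case False
  have Gc: "G \<in> carrier_mat (d * m) (d * m)" and sym: "transpose_mat G = G"
    and rk: "vec_space.rank (d * m) G \<le> d" and diag: "\<And>i. i < m \<Longrightarrow> blk d G i i = 1\<^sub>m d"
    and next_SO: "\<And>i. i + 1 < m \<Longrightarrow> blk d G i (i + 1) \<in> SO d"
    using GB by (auto simp: feasB_def mat_rank_def)
  have Id: "G $$ (a, b) = (if a = b then 1 else 0)" if "a < d" "b < d" for a b
    using arg_cong[OF diag[of 0], of "\<lambda>X. X $$ (a, b)"] False that by (simp add: blk_def)
  define R where "R = mat d (d * m) (\<lambda>(a, c). G $$ (a, c))"
  have Rc: "R \<in> carrier_mat d (d * m)" by (simp add: R_def)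
  have GR: "G = transpose_mat R * R"
    unfolding R_def using False by (intro symmetric_rank_le_eq_gram[OF Gc sym _ Id rk]) simp
  have orth: "transpose_mat (cblk d R i) * cblk d R i = 1\<^sub>m d" if "i < m" for i
    using blk_transpose_mult[OF Rc that that] diag[OF that] GR by simp
  have "cblk d R 0 = 1\<^sub>m d"
  proof (rule eq_matI)
    fix a b assume "a < dim_row (1\<^sub>m d)" "b < dim_col (1\<^sub>m d)"
    moreover then have "b < d * m" using block_index_less[of b d 0 m] False by simp
    ultimately show "cblk d R 0 $$ (a, b) = 1\<^sub>m d $$ (a, b)"
      by (simp add: cblk_def R_def Id)
  qed (simp_all add: cblk_def)
  moreover have "det (transpose_mat (cblk d R i) * cblk d R (i + 1)) = 1" if "i + 1 < m" for i
    using blk_transpose_mult[OF Rc, of i "i + 1"] next_SO[OF that] GR that by (simp add: SO_def)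
  ultimately have "det (cblk d R i) = 1" if "i < m" for i
    using det_chain_eq_one[of "cblk d R" d m i] that by (simp add: cblk_def)
  then have "feasA d m R"
    using Rc orth by (auto simp: feasA_def SO_def cblk_def)
  then show ?thesis using GR by blast
qed

lemma feasB_iff_gram_of_feasA:
  "feasB d m G \<longleftrightarrow> (\<exists>R. feasA d m R \<and> G = transpose_mat R * R)"
  using feasB_transpose_mult_self feasB_imp_gram_of_feasA by blast

lemma minB_iff_gram_of_minA:
  "minB d m C G \<longleftrightarrow> (\<exists>R. minA d m C R \<and> G = transpose_mat R * R)"
  unfolding minB_def minA_def feasB_iff_gram_of_feasA by blast

theorem theorem2:
  fixes d m :: nat
    and P :: "nat \<Rightarrow> real vec set"
    and n :: "nat \<Rightarrow> nat \<Rightarrow> nat"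
    and x :: "nat \<Rightarrow> nat \<Rightarrow> nat \<Rightarrow> real vec"
    and G :: "real mat"
  assumes P_dim: "\<And>i. i < m \<Longrightarrow> P i \<subseteq> carrier_vec d"
    and n_sym: "\<And>i j. n i j = n j i"
    and x_mem: "\<And>i j k. i < m \<Longrightarrow> j < m \<Longrightarrow> i \<noteq> j \<Longrightarrow> k < n i j \<Longrightarrow> x i j k \<in> P i"
  shows "minB d m (Cmat d m n x) G \<longleftrightarrow>
         (\<exists>R. minA d m (Cmat d m n x) R \<and> G = transpose_mat R * R)"
  by (rule minB_iff_gram_of_minA)

end
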